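(* Let $1<\alpha<2$ and $k_{1/2}(x):=x^{\alpha/2-1}(1-x)^{\alpha/2-1}$ for $x\in(0,1)$. Then \[ \big(D\,\mathbf{D}^{-(2-\alpha)}+D\,\mathbf{D}^{-(2-\alpha)*}\big)k_{1/2}(x)=0,\qquad x\in(0,1). \]
   Context: $D=d/dx$. For $\sigma>0$ and $u$ on $(0,1)$: $\mathbf{D}^{-\sigma}u(x)=\frac{1}{\Gamma(\sigma)}\int_0^x (x-s)^{\sigma-1}u(s)\,ds$ and $\mathbf{D}^{-\sigma*}u(x)=\frac{1}{\Gamma(\sigma)}\int_x^1 (s-x)^{\sigma-1}u(s)\,ds$. *)

theory Defs
  imports "HOL-Analysis.Analysis"
begin

definition frac_int_left :: "real \<Rightarrow> (real \<Rightarrow> real) \<Rightarrow> real \<Rightarrow> real" where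
  "frac_int_left \<sigma> u x = (LINT s:{0..x}|lborel. (x - s) powr (\<sigma> - 1) * u s) / Gamma \<sigma>"

definition frac_int_right :: "real \<Rightarrow> (real \<Rightarrow> real) \<Rightarrow> real \<Rightarrow> real" where
  "frac_int_right \<sigma> u x = (LINT s:{x..1}|lborel. (s - x) powr (\<sigma> - 1) * u s) / Gamma \<sigma>"

end

theory Submission
  imports Defs
begin

text \<open>Write p = \<alpha>/2 and w_a(t) = t^a (1 - t)^a, so that k = w_(p-1).
  The substitution t = s u / (1 - s + s u) shows that w_(p-1) is, up to the factor
  B(1 - p, 2p - 1), the Riemann--Liouville integral of order 2p - 1 of w_(-p).
  As the orders 2 - 2p and 2p - 1 add up to 1, the semigroup property makes the left
  integral of order 2 - \<alpha> of k a constant multiple C of the primitive of w_(-p), with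
  derivative C w_(-p)(x). Since k is symmetric under t \<mapsto> 1 - t, the right integral at x
  is the left one at 1 - x, whose derivative is -C w_(-p)(1 - x) = -C w_(-p)(x).\<close>

definition beta_weight :: "real \<Rightarrow> real \<Rightarrow> real" where
  "beta_weight a t = t powr a * (1 - t) powr a"

lemma beta_weight_reflect [simp]: "beta_weight a (1 - t) = beta_weight a t"
  by (simp add: beta_weight_def mult.commute)

lemma beta_weight_nonneg [simp]: "0 \<le> beta_weight a t"
  by (simp add: beta_weight_def)

lemma borel_measurable_beta_weight [measurable]: "beta_weight a \<in> borel_measurable borel"
  unfolding beta_weight_def by measurable

lemma Beta_real_pos: "0 < a \<Longrightarrow> 0 < b \<Longrightarrow> 0 < Beta a (b::real)"
  by (simp add: Beta_def Gamma_real_pos)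

lemma nn_integral_Beta_interval:
  fixes a b t x :: real
  assumes ab: "0 < a" "0 < b" and tx: "t < x"
  shows "(\<integral>\<^sup>+s. ennreal (indicator {t..x} s * (x - s) powr (a - 1) * (s - t) powr (b - 1)) \<partial>lborel)
       = ennreal ((x - t) powr (a + b - 1) * Beta a b)"
proof -
  define \<phi> where "\<phi> u = t + (x - t) * u" for u
  have "(\<integral>\<^sup>+s. ennreal (indicator {t..x} s * (x - s) powr (a - 1) * (s - t) powr (b - 1)) \<partial>lborel)
      = (\<integral>\<^sup>+s. ennreal ((x - s) powr (a - 1) * (s - t) powr (b - 1) * indicator {\<phi> 0..\<phi> 1} s) \<partial>lborel)"
    by (simp add: \<phi>_def mult_ac)
  also have "\<dots> = (\<integral>\<^sup>+u. ennreal ((x - \<phi> u) powr (a - 1) * (\<phi> u - t) powr (b - 1) * (x - t) * indicator {0..1} u) \<partial>lborel)"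
    by (rule nn_integral_substitution[where g=\<phi> and g'="\<lambda>_. x - t"])
       (use tx in \<open>auto simp: set_borel_measurable_def \<phi>_def[abs_def] intro!: derivative_eq_intros\<close>)
  also have "\<dots> = (\<integral>\<^sup>+u. ennreal (indicator {0..1} u * ((x - t) powr (a + b - 1) * (u powr (b - 1) * (1 - u) powr (a - 1)))) \<partial>lborel)"
  proof (rule nn_integral_cong)
    fix u :: real
    have "(x - \<phi> u) powr (a - 1) * (\<phi> u - t) powr (b - 1) * (x - t)
        = (x - t) powr (a + b - 1) * (u powr (b - 1) * (1 - u) powr (a - 1))" if "u \<in> {0..1}"
    proof -
      have "x - \<phi> u = (x - t) * (1 - u)" "\<phi> u - t = (x - t) * u"
        by (simp_all add: \<phi>_def algebra_simps)
      moreover have "(x - t) powr (a + b - 1) = (x - t) powr (a - 1) * (x - t) powr (b - 1) * (x - t)"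
        using tx powr_add[of "x - t" "a - 1 + (b - 1)" 1] powr_add[of "x - t" "a - 1" "b - 1"]
        by (simp add: algebra_simps)
      ultimately show ?thesis
        using that tx by (simp add: powr_mult)
    qed
    then show "ennreal ((x - \<phi> u) powr (a - 1) * (\<phi> u - t) powr (b - 1) * (x - t) * indicator {0..1} u)
        = ennreal (indicator {0..1} u * ((x - t) powr (a + b - 1) * (u powr (b - 1) * (1 - u) powr (a - 1))))"
      by (simp add: indicator_def mult.assoc)
  qed
  also have "\<dots> = ennreal ((x - t) powr (a + b - 1) * Beta a b)"
    by (rule nn_integral_has_integral_lebesgue)
       (use has_integral_mult_right[OF has_integral_Beta_real[OF ab(2,1)]] in \<open>auto simp: Beta_commute\<close>)
  finally show ?thesis .
qed

lemma nn_integral_frac_int_semigroup: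
  fixes a b x :: real and f :: "real \<Rightarrow> real"
  assumes ab: "0 < a" "0 < b" and f [measurable]: "f \<in> borel_measurable borel"
    and f_nonneg: "\<And>t. 0 \<le> f t"
  shows "(\<integral>\<^sup>+s. ennreal (indicator {0..x} s * (x - s) powr (a - 1))
              * (\<integral>\<^sup>+t. ennreal (indicator {0..s} t * (s - t) powr (b - 1) * f t) \<partial>lborel) \<partial>lborel)
       = ennreal (Beta a b)
           * (\<integral>\<^sup>+t. ennreal (indicator {0..x} t * (x - t) powr (a + b - 1) * f t) \<partial>lborel)"
proof -
  define H where "H s t = ennreal (if 0 \<le> t \<and> t \<le> s \<and> s \<le> x
                                   then (x - s) powr (a - 1) * ((s - t) powr (b - 1) * f t) else 0)" for s t
  have [measurable]: "f \<in> borel_measurable lborel"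
    by simp
  have [measurable]: "case_prod H \<in> borel_measurable (lborel \<Otimes>\<^sub>M lborel)"
    unfolding H_def by measurable
  have inner: "(\<integral>\<^sup>+s. H s t \<partial>lborel)
             = ennreal (Beta a b) * ennreal (indicator {0..x} t * (x - t) powr (a + b - 1) * f t)" for t
  proof (cases "0 \<le> t \<and> t < x")
    case True
    have "H s t = ennreal (f t) * ennreal (indicator {t..x} s * (x - s) powr (a - 1) * (s - t) powr (b - 1))" for s
      using True f_nonneg[of t] by (auto simp: H_def indicator_def ennreal_mult'[symmetric] mult_ac)
    then have "(\<integral>\<^sup>+s. H s t \<partial>lborel) = ennreal (f t) * ennreal ((x - t) powr (a + b - 1) * Beta a b)"
      using True ab by (simp add: nn_integral_cmult nn_integral_Beta_interval)
    then show ?thesis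
      using True f_nonneg[of t] Beta_real_pos[OF ab]
      by (simp add: ennreal_mult'[symmetric] mult_ac)
  next
    case False
    then have "H s t = 0" for s
      by (cases "s = x") (auto simp: H_def)
    then show ?thesis
      using False by (auto simp: indicator_def)
  qed
  have "(\<integral>\<^sup>+s. ennreal (indicator {0..x} s * (x - s) powr (a - 1))
              * (\<integral>\<^sup>+t. ennreal (indicator {0..s} t * (s - t) powr (b - 1) * f t) \<partial>lborel) \<partial>lborel)
      = (\<integral>\<^sup>+s. \<integral>\<^sup>+t. H s t \<partial>lborel \<partial>lborel)"
    using f_nonneg
    by (auto simp: H_def indicator_def ennreal_mult'[symmetric] nn_integral_cmult[symmetric]
             intro!: nn_integral_cong)
  also have "\<dots> = (\<integral>\<^sup>+t. \<integral>\<^sup>+s. H s t \<partial>lborel \<partial>lborel)"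
    by (rule lborel_pair.Fubini'[symmetric]) measurable
  also have "\<dots> = ennreal (Beta a b)
           * (\<integral>\<^sup>+t. ennreal (indicator {0..x} t * (x - t) powr (a + b - 1) * f t) \<partial>lborel)"
    by (simp add: inner nn_integral_cmult)
  finally show ?thesis .
qed

lemma nn_integral_frac_int_beta_weight:
  fixes p s :: real
  assumes p: "1/2 < p" "p < 1" and s: "0 \<le> s" "s < 1"
  shows "(\<integral>\<^sup>+t. ennreal (indicator {0..s} t * (s - t) powr (2*p - 2) * beta_weight (-p) t) \<partial>lborel)
       = ennreal (beta_weight (p - 1) s * Beta (1 - p) (2*p - 1))"
proof -
  \<comment> \<open>The Moebius map \<open>\<phi>\<close> sends \<open>[0,1]\<close> onto \<open>[0,s]\<close> and turns the integrand into a Beta density.\<close>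
  define D where "D u = 1 - s + s * u" for u
  define \<phi> where "\<phi> u = s * u / D u" for u
  define \<phi>' where "\<phi>' u = s * (1 - s) / (D u)\<^sup>2" for u
  have D_pos: "0 < D u" if "0 \<le> u" for u
    unfolding D_def using s that by (smt (verit) mult_nonneg_nonneg)
  have "(\<integral>\<^sup>+t. ennreal (indicator {0..s} t * (s - t) powr (2*p - 2) * beta_weight (-p) t) \<partial>lborel)
      = (\<integral>\<^sup>+t. ennreal ((s - t) powr (2*p - 2) * beta_weight (-p) t * indicator {\<phi> 0..\<phi> 1} t) \<partial>lborel)"
    by (simp add: \<phi>_def D_def mult_ac)
  also have "\<dots> = (\<integral>\<^sup>+u. ennreal ((s - \<phi> u) powr (2*p - 2) * beta_weight (-p) (\<phi> u) * \<phi>' u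
                                    * indicator {0..1} u) \<partial>lborel)"
  proof (rule nn_integral_substitution)
    show "(\<phi> has_real_derivative \<phi>' u) (at u)" if "u \<in> {0..1}" for u
      unfolding \<phi>_def[abs_def] \<phi>'_def D_def using D_pos[of u] that
      by (auto intro!: derivative_eq_intros simp: D_def field_simps power2_eq_square)
    show "continuous_on {0..1} \<phi>'"
      unfolding \<phi>'_def D_def by (intro continuous_intros) (use D_pos in \<open>force simp: D_def\<close>)
  qed (use s in \<open>auto simp: \<phi>'_def set_borel_measurable_def\<close>)
  also have "\<dots> = (\<integral>\<^sup>+u. ennreal (indicator {0..1} u * (beta_weight (p - 1) s
                                 * (u powr ((1 - p) - 1) * (1 - u) powr ((2*p - 1) - 1)))) \<partial>lborel)"
  proof (rule nn_integral_cong)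
    fix u :: real
    show "ennreal ((s - \<phi> u) powr (2*p - 2) * beta_weight (-p) (\<phi> u) * \<phi>' u * indicator {0..1} u)
        = ennreal (indicator {0..1} u * (beta_weight (p - 1) s
                     * (u powr ((1 - p) - 1) * (1 - u) powr ((2*p - 1) - 1))))"
    proof (cases "0 < s \<and> 0 < u \<and> u < 1")
      case True
      then have D: "0 < D u" using D_pos by auto
      have "s - \<phi> u = s * (1 - s) * (1 - u) / D u" "1 - \<phi> u = (1 - s) / D u"
        unfolding \<phi>_def using D by (simp_all add: D_def field_simps)
      moreover have "(s * (1 - s) * (1 - u) / D u) powr (2*p - 2)
            * ((s * u / D u) powr (-p) * ((1 - s) / D u) powr (-p)) * (s * (1 - s) / (D u)\<^sup>2)
          = s powr (p - 1) * (1 - s) powr (p - 1) * (u powr (-p) * (1 - u) powr (2*p - 2))"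
        (is "?L = ?R")
      proof -
        have "ln ?L = ln ?R"
          using True D s by (simp add: ln_mult ln_div ln_powr ln_realpow) (simp add: algebra_simps)
        moreover have "0 < ?L" "0 < ?R"
          using True D s by simp_all
        ultimately show ?thesis
          by simp
      qed
      ultimately show ?thesis
        using True by (simp add: beta_weight_def \<phi>'_def \<phi>_def[symmetric] mult.assoc)
    next
      case False
      then consider "u < 0 \<or> u > 1" | "u = 0" | "u = 1" | "s = 0" using s by linarith
      then show ?thesis
        by cases (auto simp: \<phi>_def \<phi>'_def D_def beta_weight_def)
    qed
  qed
  also have "\<dots> = ennreal (beta_weight (p - 1) s * Beta (1 - p) (2*p - 1))"
    by (rule nn_integral_has_integral_lebesgue)
       (use s p has_integral_mult_right[OF has_integral_Beta_real[of "1 - p" "2*p - 1"]] in auto)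
  finally show ?thesis .
qed

lemma frac_int_left_beta_weight:
  fixes p y :: real
  assumes p: "1/2 < p" "p < 1" and y: "0 \<le> y" "y < 1"
  shows "frac_int_left (2 - 2*p) (beta_weight (p - 1)) y
       = Gamma (2*p - 1) / Beta (1 - p) (2*p - 1) * integral {0..y} (beta_weight (-p))"
proof -
  define N where "N = (\<integral>\<^sup>+s. ennreal (indicator {0..y} s * ((y - s) powr (2 - 2*p - 1)
                                          * beta_weight (p - 1) s)) \<partial>lborel)"
  define I where "I = integral {0..y} (beta_weight (-p))"
  have B_pos: "0 < Beta (1 - p) (2*p - 1)" "0 < Beta (2 - 2*p) (2*p - 1)"
    using p by (simp_all add: Beta_real_pos)
  have "(beta_weight (-p) has_integral Beta (1 - p) (1 - p)) {0..1}"
    using has_integral_Beta_real[of "1 - p" "1 - p"] p by (simp add: beta_weight_def[abs_def])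
  then have I: "(beta_weight (-p) has_integral I) {0..y}" "0 \<le> I"
    unfolding I_def using y
    by (auto intro!: integrable_integral integral_nonneg integrable_on_subinterval)
  have inner: "(\<integral>\<^sup>+t. ennreal (indicator {0..s} t * (s - t) powr ((2*p - 1) - 1)
                                * beta_weight (-p) t) \<partial>lborel)
             = ennreal (beta_weight (p - 1) s * Beta (1 - p) (2*p - 1))" if "s \<in> {0..y}" for s
    using nn_integral_frac_int_beta_weight[OF p, of s] that y by (simp add: algebra_simps)
  have "N * ennreal (Beta (1 - p) (2*p - 1))
      = (\<integral>\<^sup>+s. ennreal (indicator {0..y} s * (y - s) powr ((2 - 2*p) - 1))
              * (\<integral>\<^sup>+t. ennreal (indicator {0..s} t * (s - t) powr ((2*p - 1) - 1)
                                  * beta_weight (-p) t) \<partial>lborel) \<partial>lborel)"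
    unfolding N_def
  proof (subst nn_integral_multc[symmetric], measurable, rule nn_integral_cong)
    fix s :: real
    show "ennreal (indicator {0..y} s * ((y - s) powr (2 - 2*p - 1) * beta_weight (p - 1) s))
            * ennreal (Beta (1 - p) (2*p - 1))
        = ennreal (indicator {0..y} s * (y - s) powr ((2 - 2*p) - 1))
            * (\<integral>\<^sup>+t. ennreal (indicator {0..s} t * (s - t) powr ((2*p - 1) - 1)
                                * beta_weight (-p) t) \<partial>lborel)"
    proof (cases "s \<in> {0..y}")
      case True
      show ?thesis
        unfolding inner[OF True] using True B_pos by (simp add: ennreal_mult'[symmetric] mult_ac)
    qed simp
  qed
  also have "\<dots> = ennreal (Beta (2 - 2*p) (2*p - 1))
      * (\<integral>\<^sup>+t. ennreal (indicator {0..y} t * (y - t) powr ((2 - 2*p) + (2*p - 1) - 1)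
                          * beta_weight (-p) t) \<partial>lborel)"
    by (rule nn_integral_frac_int_semigroup) (use p in auto)
  also have "(\<integral>\<^sup>+t. ennreal (indicator {0..y} t * (y - t) powr ((2 - 2*p) + (2*p - 1) - 1)
                          * beta_weight (-p) t) \<partial>lborel)
           = (\<integral>\<^sup>+t. ennreal (indicator {0..y} t * beta_weight (-p) t) \<partial>lborel)"
    \<comment> \<open>only almost everywhere: \<open>0 powr 0 = 0\<close>\<close>
    using AE_lborel_singleton[of y] by (intro nn_integral_cong_AE) auto
  also have "\<dots> = ennreal I"
    by (rule nn_integral_has_integral_lebesgue[OF _ I(1)]) simp
  finally have "enn2real N * Beta (1 - p) (2*p - 1) = Beta (2 - 2*p) (2*p - 1) * I"
    using B_pos I(2) by (metis enn2real_mult enn2real_ennreal less_imp_le)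
  moreover have "Beta (2 - 2*p) (2*p - 1) = Gamma (2*p - 1) * Gamma (2 - 2*p)"
    by (simp add: Beta_def)
  moreover have "0 < Gamma (2 - 2*p)"
    using p by (simp add: Gamma_real_pos)
  ultimately have "enn2real N / Gamma (2 - 2*p) = Gamma (2*p - 1) / Beta (1 - p) (2*p - 1) * I"
    using B_pos by (simp add: field_simps)
  moreover have "frac_int_left (2 - 2*p) (beta_weight (p - 1)) y = enn2real N / Gamma (2 - 2*p)"
    unfolding frac_int_left_def set_lebesgue_integral_def N_def
    by (subst integral_eq_nn_integral) auto
  ultimately show ?thesis
    unfolding I_def by simp
qed

lemma has_real_derivative_frac_int_left_beta_weight:
  fixes p z :: real
  assumes p: "1/2 < p" "p < 1" and z: "0 < z" "z < 1"
  shows "(frac_int_left (2 - 2*p) (beta_weight (p - 1)) has_real_derivative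
            Gamma (2*p - 1) / Beta (1 - p) (2*p - 1) * beta_weight (-p) z) (at z)"
proof -
  define C where "C = Gamma (2*p - 1) / Beta (1 - p) (2*p - 1)"
  have "beta_weight (-p) integrable_on {0..1}"
    using has_integral_Beta_real[of "1 - p" "1 - p"] p by (auto simp: beta_weight_def[abs_def])
  moreover have "continuous (at z within {0..1}) (beta_weight (-p))"
    using z unfolding beta_weight_def by (intro continuous_intros) auto
  ultimately have "((\<lambda>y. integral {0..y} (beta_weight (-p))) has_vector_derivative beta_weight (-p) z)
                     (at z within {0..1})"
    using z by (intro integral_has_vector_derivative_continuous_at[where S="{}", simplified]) auto
  then have "((\<lambda>y. C * integral {0..y} (beta_weight (-p))) has_real_derivative C * beta_weight (-p) z)
               (at z)"
    using z by (intro DERIV_cmult) (simp add: has_real_derivative_iff_has_vector_derivative at_within_Icc_at)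
  then show ?thesis
    unfolding C_def
    by (rule has_field_derivative_transform_within_open[where S="{0<..<1}"])
       (use z p in \<open>auto simp: frac_int_left_beta_weight\<close>)
qed

lemma frac_int_right_eq_frac_int_left_reflect:
  fixes \<sigma> y :: real and f :: "real \<Rightarrow> real"
  assumes f_reflect: "\<And>s. f (1 - s) = f s"
  shows "frac_int_right \<sigma> f y = frac_int_left \<sigma> f (1 - y)"
proof -
  have "(LINT s:{y..1}|lborel. (s - y) powr (\<sigma> - 1) * f s)
      = (LINT s|lborel. indicator {y..1} s *\<^sub>R ((s - y) powr (\<sigma> - 1) * f s))"
    by (simp add: set_lebesgue_integral_def)
  also have "\<dots> = (LINT s|lborel. indicator {y..1} (1 - s) *\<^sub>R ((1 - s - y) powr (\<sigma> - 1) * f (1 - s)))"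
    using lborel_integral_real_affine[of "-1" _ 1] by simp
  also have "\<dots> = (LINT s|lborel. indicator {0..1 - y} s *\<^sub>R ((1 - y - s) powr (\<sigma> - 1) * f s))"
    using f_reflect by (intro Bochner_Integration.integral_cong) (auto simp: indicator_def algebra_simps)
  also have "\<dots> = (LINT s:{0..1 - y}|lborel. (1 - y - s) powr (\<sigma> - 1) * f s)"
    by (simp add: set_lebesgue_integral_def)
  finally show ?thesis
    unfolding frac_int_right_def frac_int_left_def by simp
qed

theorem lemma4p1:
  fixes \<alpha> x :: real
  assumes "1 < \<alpha>" "\<alpha> < 2" "0 < x" "x < 1"
  defines "k \<equiv> (\<lambda>y::real. y powr (\<alpha>/2 - 1) * (1 - y) powr (\<alpha>/2 - 1))"
  shows "\<exists>d1 d2. (frac_int_left (2 - \<alpha>) k has_real_derivative d1) (at x)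
              \<and> (frac_int_right (2 - \<alpha>) k has_real_derivative d2) (at x)
              \<and> d1 + d2 = 0"
proof -
  define p where "p = \<alpha>/2"
  have p: "1/2 < p" "p < 1" and \<alpha>: "2 - \<alpha> = 2 - 2*p"
    using assms by (auto simp: p_def)
  have k: "k = beta_weight (p - 1)"
    unfolding k_def p_def beta_weight_def by simp
  define d where "d = Gamma (2*p - 1) / Beta (1 - p) (2*p - 1) * beta_weight (-p) x"
  have left: "(frac_int_left (2 - \<alpha>) k has_real_derivative d) (at z)" if "z = x \<or> z = 1 - x" for z
    unfolding \<alpha> k d_def
    using has_real_derivative_frac_int_left_beta_weight[OF p, of z] that assms by auto
  have "frac_int_right (2 - \<alpha>) k = (\<lambda>y. frac_int_left (2 - \<alpha>) k (1 - y))"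
    unfolding k by (intro ext frac_int_right_eq_frac_int_left_reflect) simp
  moreover have "((\<lambda>y. frac_int_left (2 - \<alpha>) k (1 - y)) has_real_derivative d * (-1)) (at x)"
    by (rule DERIV_chain'[OF _ left]) (auto intro!: derivative_eq_intros)
  ultimately show ?thesis
    using left[of x] by (intro exI[of _ d] exI[of _ "-d"]) auto
qed

end
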